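(* There exist a sequence of primes $p_j\to\infty$ and a sequence of angles $\alpha_j\in(0,\pi)$ with $\alpha_j\to\pi$ such that, for each $j$, the isosceles triangle whose angle at the apex (between the two equal sides) is $\alpha_j$ is Euclidean sub-$p_j$-toral.
   Context: A $p$-torus is a group isomorphic to $(\mathbb{Z}_p)^\alpha$ for some $\alpha\ge1$. A set $X\subset\mathbb{R}^k$ is Euclidean sub-$p$-toral if there exist $n\ge k$, a $p$-torus $G$ and an action of $G$ on $\mathbb{R}^n$ by isometries such that $X$ (viewed in $\mathbb{R}^n$ via the standard inclusion $\mathbb{R}^k\subset\mathbb{R}^n$) is contained in a single $G$-orbit. A triangle is identified with its set of three vertices. *)

theory Defs
  imports Complex_Main "HOL-Computational_Algebra.Primes"
begin

text \<open>Points of R^n are represented as functions nat => real vanishing at all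
  indices >= n; the standard inclusion R^k into R^n (k <= n) is then literally the
  inclusion of sets.\<close>

definition Rn :: "nat \<Rightarrow> (nat \<Rightarrow> real) set" where
  "Rn n = {x. \<forall>i\<ge>n. x i = 0}"

definition edist :: "nat \<Rightarrow> (nat \<Rightarrow> real) \<Rightarrow> (nat \<Rightarrow> real) \<Rightarrow> real" where
  "edist n x y = sqrt (\<Sum>i<n. (x i - y i)^2)"

definition isometry_of_Rn :: "nat \<Rightarrow> ((nat \<Rightarrow> real) \<Rightarrow> (nat \<Rightarrow> real)) \<Rightarrow> bool" where
  "isometry_of_Rn n f \<longleftrightarrow> f ` Rn n = Rn n \<and>
     (\<forall>x\<in>Rn n. \<forall>y\<in>Rn n. edist n (f x) (f y) = edist n x y)"

definition ptorus :: "nat \<Rightarrow> nat \<Rightarrow> (nat \<Rightarrow> nat) set" where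
  "ptorus p \<alpha> = {g. (\<forall>i<\<alpha>. g i < p) \<and> (\<forall>i\<ge>\<alpha>. g i = 0)}"

definition ptorus_add :: "nat \<Rightarrow> (nat \<Rightarrow> nat) \<Rightarrow> (nat \<Rightarrow> nat) \<Rightarrow> (nat \<Rightarrow> nat)" where
  "ptorus_add p g h = (\<lambda>i. (g i + h i) mod p)"

definition ptorus_isometric_action ::
  "nat \<Rightarrow> nat \<Rightarrow> nat \<Rightarrow> ((nat \<Rightarrow> nat) \<Rightarrow> (nat \<Rightarrow> real) \<Rightarrow> (nat \<Rightarrow> real)) \<Rightarrow> bool" where
  "ptorus_isometric_action p \<alpha> n \<rho> \<longleftrightarrow>
     (\<forall>g\<in>ptorus p \<alpha>. isometry_of_Rn n (\<rho> g)) \<and>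
     (\<forall>x\<in>Rn n. \<rho> (\<lambda>_. 0) x = x) \<and>
     (\<forall>g\<in>ptorus p \<alpha>. \<forall>h\<in>ptorus p \<alpha>. \<forall>x\<in>Rn n.
        \<rho> (ptorus_add p g h) x = \<rho> g (\<rho> h x))"

definition euclidean_sub_ptoral :: "nat \<Rightarrow> nat \<Rightarrow> (nat \<Rightarrow> real) set \<Rightarrow> bool" where
  "euclidean_sub_ptoral p k X \<longleftrightarrow> X \<subseteq> Rn k \<and>
     (\<exists>n \<alpha> \<rho>. n \<ge> k \<and> \<alpha> \<ge> 1 \<and> ptorus_isometric_action p \<alpha> n \<rho> \<and>
        (\<exists>x\<in>Rn n. X \<subseteq> {\<rho> g x | g. g \<in> ptorus p \<alpha>}))"

definition isosceles_triangle :: "real \<Rightarrow> (nat \<Rightarrow> real) set" where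
  "isosceles_triangle a =
     {(\<lambda>i. 0),
      (\<lambda>i. if i = 0 then 1 else 0),
      (\<lambda>i. if i = 0 then cos a else if i = 1 then sin a else 0)}"

end

theory Submission
  imports Defs
begin

text \<open>Identify \<open>Rn 2\<close> with the complex plane and let \<open>Z_p\<close> act by rotating through the
  angle \<open>2 pi / p\<close> about the point \<open>c = 1 / (1 - w)\<close>, \<open>w = cis (2 pi / p)\<close>. The centre is
  chosen so that one generator moves the origin to \<open>1\<close>; its inverse moves it to
  \<open>- inverse w = cis (pi - 2 pi / p)\<close>. So the orbit of the origin, a regular \<open>p\<close>-gon,
  contains the isosceles triangle with apex angle \<open>pi - 2 pi / p\<close>, and these angles tend
  to \<open>pi\<close> along the primes.\<close>

definition complex_of_Rn2 :: "(nat \<Rightarrow> real) \<Rightarrow> complex" where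
  "complex_of_Rn2 x = Complex (x 0) (x 1)"

definition Rn2_of_complex :: "complex \<Rightarrow> nat \<Rightarrow> real" where
  "Rn2_of_complex z = (\<lambda>i. if i = 0 then Re z else if i = 1 then Im z else 0)"

lemma complex_of_Rn2_inverse [simp]: "complex_of_Rn2 (Rn2_of_complex z) = z"
  by (simp add: complex_of_Rn2_def Rn2_of_complex_def)

lemma Rn2_of_complex_inverse: "x \<in> Rn 2 \<Longrightarrow> Rn2_of_complex (complex_of_Rn2 x) = x"
  by (rule ext) (auto simp: complex_of_Rn2_def Rn2_of_complex_def Rn_def)

lemma Rn2_of_complex_in_Rn2 [simp]: "Rn2_of_complex z \<in> Rn 2"
  by (simp add: Rn2_of_complex_def Rn_def)

lemma edist_2_eq_cmod: "edist 2 x y = cmod (complex_of_Rn2 x - complex_of_Rn2 y)"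
  by (simp add: edist_def cmod_def complex_of_Rn2_def numeral_2_eq_2)

lemma power_mod_eq_power:
  fixes w :: "'a::monoid_mult"
  assumes "w ^ p = 1"
  shows "w ^ (n mod p) = w ^ n"
proof -
  have "w ^ n = (w ^ p) ^ (n div p) * w ^ (n mod p)"
    by (metis div_mult_mod_eq mult.commute power_add power_mult)
  then show ?thesis
    using assms by simp
qed

definition rotation_action :: "complex \<Rightarrow> complex \<Rightarrow> (nat \<Rightarrow> nat) \<Rightarrow> (nat \<Rightarrow> real) \<Rightarrow> (nat \<Rightarrow> real)"
  where "rotation_action c w g x = Rn2_of_complex (c + w ^ g 0 * (complex_of_Rn2 x - c))"

lemma isometry_rotation_action:
  assumes "cmod w = 1"
  shows "isometry_of_Rn 2 (rotation_action c w g)"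
proof -
  have "w ^ g 0 \<noteq> 0"
    using assms by auto
  then have "y \<in> rotation_action c w g ` Rn 2" if "y \<in> Rn 2" for y
    using that
    by (intro image_eqI[of _ _ "Rn2_of_complex (c + (complex_of_Rn2 y - c) / w ^ g 0)"])
      (simp_all add: rotation_action_def Rn2_of_complex_inverse)
  then have "rotation_action c w g ` Rn 2 = Rn 2"
    by (auto simp: rotation_action_def)
  moreover have "edist 2 (rotation_action c w g x) (rotation_action c w g y) = edist 2 x y"
    for x y
  proof -
    have "c + w ^ g 0 * (complex_of_Rn2 x - c) - (c + w ^ g 0 * (complex_of_Rn2 y - c))
          = w ^ g 0 * (complex_of_Rn2 x - complex_of_Rn2 y)"
      by (simp add: algebra_simps)
    then show ?thesis
      using assms by (simp add: edist_2_eq_cmod rotation_action_def norm_mult norm_power)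
  qed
  ultimately show ?thesis
    by (simp add: isometry_of_Rn_def)
qed

lemma ptorus_isometric_rotation_action:
  assumes "0 < p" and "w ^ p = 1"
  shows "ptorus_isometric_action p 1 2 (rotation_action c w)"
proof -
  have "cmod w = 1"
    using assms power_eq_1_iff by blast
  then have "isometry_of_Rn 2 (rotation_action c w g)" for g
    by (rule isometry_rotation_action)
  moreover have "rotation_action c w (ptorus_add p g h) x = rotation_action c w g (rotation_action c w h x)"
    for g h x
    by (simp add: rotation_action_def ptorus_add_def power_mod_eq_power[OF assms(2)]
        power_add algebra_simps)
  ultimately show ?thesis
    by (simp add: ptorus_isometric_action_def rotation_action_def Rn2_of_complex_inverse)
qed

lemma rotation_about_inverse_one_minus:
  fixes w :: complex
  assumes "w \<noteq> 0" and "w \<noteq> 1"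
  shows "1 / (1 - w) + w * (0 - 1 / (1 - w)) = 1"
    and "1 / (1 - w) + inverse w * (0 - 1 / (1 - w)) = - inverse w"
proof -
  have "1 - w \<noteq> 0"
    using assms by simp
  then show "1 / (1 - w) + w * (0 - 1 / (1 - w)) = 1"
    by (simp add: field_simps)
  have "1 / (1 - w) + inverse w * (0 - 1 / (1 - w)) = (1 - inverse w) / (1 - w)"
    by (simp add: diff_divide_distrib)
  also have "1 - inverse w = - inverse w * (1 - w)"
    using assms by (simp add: algebra_simps)
  finally show "1 / (1 - w) + inverse w * (0 - 1 / (1 - w)) = - inverse w"
    using \<open>1 - w \<noteq> 0\<close> by simp
qed

lemma isosceles_triangle_eq_Rn2_of_complex:
  "isosceles_triangle a = Rn2_of_complex ` {0, 1, cis a}"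
proof -
  have "Rn2_of_complex 0 = (\<lambda>_. 0)" "Rn2_of_complex 1 = (\<lambda>i. if i = 0 then 1 else 0)"
    "Rn2_of_complex (cis a) = (\<lambda>i. if i = 0 then cos a else if i = 1 then sin a else 0)"
    by (auto simp: Rn2_of_complex_def)
  then show ?thesis
    by (simp add: isosceles_triangle_def)
qed

lemma isosceles_triangle_sub_ptoral:
  assumes "0 < p" and "cis (pi - a) ^ p = 1" and "cis (pi - a) \<noteq> 1"
  shows "euclidean_sub_ptoral p 2 (isosceles_triangle a)"
proof -
  define w where "w = cis (pi - a)"
  define \<rho> where "\<rho> = rotation_action (1 / (1 - w)) w"
  define origin :: "nat \<Rightarrow> real" where "origin = Rn2_of_complex 0"
  let ?orbit = "{\<rho> g origin | g. g \<in> ptorus p 1}"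
  have w: "w \<noteq> 0" "w \<noteq> 1" "w ^ p = 1"
    using assms by (simp_all add: w_def)
  have "1 < p"
    using w(2,3) \<open>0 < p\<close> by (cases "p = 1") auto
  have orbit_point: "Rn2_of_complex (1 / (1 - w) + w ^ k * (0 - 1 / (1 - w))) \<in> ?orbit"
    if "k < p" for k
    using that by (intro CollectI exI[of _ "\<lambda>i. if i = 0 then k else 0"])
      (simp add: \<rho>_def rotation_action_def origin_def ptorus_def)
  have "w * w ^ (p - 1) = 1"
    using w(3) \<open>0 < p\<close> by (simp flip: power_Suc)
  then have "w ^ (p - 1) = inverse w"
    by (simp add: inverse_unique)
  then have "Rn2_of_complex (- inverse w) \<in> ?orbit"
    using orbit_point[of "p - 1"] rotation_about_inverse_one_minus[OF w(1,2)] \<open>0 < p\<close>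
    by simp
  moreover have "Rn2_of_complex 1 \<in> ?orbit"
    using orbit_point[of 1] \<open>1 < p\<close> rotation_about_inverse_one_minus[OF w(1,2)]
    by (simp del: One_nat_def)
  moreover have "Rn2_of_complex 0 \<in> ?orbit"
    using orbit_point[of 0] \<open>0 < p\<close> by simp
  moreover have "- inverse w = cis a"
    by (simp add: w_def complex_eq_iff)
  ultimately have "isosceles_triangle a \<subseteq> ?orbit"
    by (simp add: isosceles_triangle_eq_Rn2_of_complex)
  moreover have "ptorus_isometric_action p 1 2 \<rho>"
    unfolding \<rho>_def using \<open>0 < p\<close> w(3) by (rule ptorus_isometric_rotation_action)
  ultimately show ?thesis
    unfolding euclidean_sub_ptoral_def
    by (intro conjI exI[of _ 2] exI[of _ 1] exI[of _ \<rho>] bexI[of _ origin])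
      (auto simp: isosceles_triangle_eq_Rn2_of_complex origin_def)
qed

lemma cis_two_pi_div_ne_1:
  assumes "2 \<le> p"
  shows "cis (2 * pi / real p) \<noteq> 1"
proof
  assume "cis (2 * pi / real p) = 1"
  then have "cos (2 * pi / real p) = 1"
    by (simp add: complex_eq_iff)
  then obtain k :: int where k: "2 * pi / real p = 2 * pi * k"
    using cos_one_2pi_int by (metis mult.commute mult.left_commute)
  have "0 < 2 * pi / real p" and "2 * pi / real p < 2 * pi"
    using assms by (simp_all add: field_simps)
  then have "0 < k" and "k < 1"
    using k by (auto simp: mult_less_cancel_left_pos zero_less_mult_iff)
  then show False
    by simp
qed

lemma isosceles_triangle_regular_polygon_sub_ptoral:
  assumes "2 \<le> p"
  shows "euclidean_sub_ptoral p 2 (isosceles_triangle (pi - 2 * pi / real p))"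
proof (rule isosceles_triangle_sub_ptoral)
  show "cis (pi - (pi - 2 * pi / real p)) ^ p = 1"
    using assms by (simp add: DeMoivre)
  show "cis (pi - (pi - 2 * pi / real p)) \<noteq> 1"
    using cis_two_pi_div_ne_1[OF assms] by simp
qed (use assms in simp)

theorem lemma4:
  shows "\<exists>(p :: nat \<Rightarrow> nat) (a :: nat \<Rightarrow> real).
           (\<forall>j. prime (p j)) \<and> filterlim p at_top sequentially \<and>
           (\<forall>j. 0 < a j \<and> a j < pi) \<and> a \<longlonglongrightarrow> pi \<and>
           (\<forall>j. euclidean_sub_ptoral (p j) 2 (isosceles_triangle (a j)))"
proof -
  define p where "p j = (SOME q. prime q \<and> j + 2 < q)" for j :: nat
  have p: "prime (p j)" "j + 2 < p j" for j
    using someI_ex[OF bigger_prime[of "j + 2"]] by (simp_all add: p_def)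
  define a where "a j = pi - 2 * pi / real (p j)" for j
  have "j \<le> p j" for j
    using p(2)[of j] by simp
  then have p_lim: "filterlim p at_top sequentially"
    by (intro filterlim_at_top_mono[OF filterlim_ident] always_eventually allI)
  then have "(\<lambda>j. 2 * pi / real (p j)) \<longlonglongrightarrow> 0"
    by (intro tendsto_divide_0[OF tendsto_const] filterlim_at_top_imp_at_infinity
        filterlim_compose[OF filterlim_real_sequentially])
  then have "a \<longlonglongrightarrow> pi"
    unfolding a_def using tendsto_diff[OF tendsto_const, of _ 0 sequentially pi] by simp
  moreover have "0 < a j \<and> a j < pi" for j
    using p(2)[of j] by (simp add: a_def field_simps)
  moreover have "euclidean_sub_ptoral (p j) 2 (isosceles_triangle (a j))" for j
    unfolding a_def using p(2)[of j] by (intro isosceles_triangle_regular_polygon_sub_ptoral) simp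
  ultimately show ?thesis
    using p(1) p_lim by blast
qed

end
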